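(* Every Taylor graph is pseudo-vertex-transitive.
   Context: A Taylor graph is a distance-regular graph with intersection array $\{k,b,1;1,b,k\}$ where $b<k-1$; it has diameter $D=3$. Let $\Gamma$ have vertex set $X$, distance $\partial$, adjacency matrix $A$, and $V=\mathbb{C}^X$. For $x\in X$ and $0\le i\le D$ let $E^*_i(x)$ be the diagonal matrix with $(E^*_i(x))_{yy}=1$ if $\partial(x,y)=i$ and $0$ otherwise. The Terwilliger algebra $T(x)$ is the subalgebra of $\mathrm{Mat}_X(\mathbb{C})$ generated by $A,E^*_0(x),\dots,E^*_D(x)$. The graph $\Gamma$ is pseudo-vertex-transitive if for all $x,y\in X$: (i) there is a $\mathbb{C}$-algebra isomorphism $T(x)\to T(y)$ sending $A\mapsto A$ and $E^*_i(x)\mapsto E^*_i(y)$ for all $i$; and (ii) there is a $\mathbb{C}$-linear bijection $\rho:V\to V$ with $\rho A=A\rho$ and $\rho E^*_i(x)=E^*_i(y)\rho$ for all $i$. *)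

theory Defs
  imports "HOL-Analysis.Analysis"
begin

text \<open>Graphs: vertex set = a finite type 'a, adjacency = a relation E.
  Matrices in Mat_X(C) are elements of complex^'a^'a, V = complex^'a.\<close>

definition simple_graph :: "('a \<Rightarrow> 'a \<Rightarrow> bool) \<Rightarrow> bool" where
  "simple_graph E \<longleftrightarrow> (\<forall>x y. E x y \<longleftrightarrow> E y x) \<and> (\<forall>x. \<not> E x x)"

definition connected_graph :: "('a \<Rightarrow> 'a \<Rightarrow> bool) \<Rightarrow> bool" where
  "connected_graph E \<longleftrightarrow> (\<forall>x y. \<exists>n. (E ^^ n) x y)"

definition gdist :: "('a \<Rightarrow> 'a \<Rightarrow> bool) \<Rightarrow> 'a \<Rightarrow> 'a \<Rightarrow> nat" where
  "gdist E x y = (LEAST n. (E ^^ n) x y)"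

text \<open>Distance-regular graph of diameter D with intersection array
  {b 0, ..., b (D-1); c 1, ..., c D}.\<close>
definition distance_regular_ia ::
  "('a::finite \<Rightarrow> 'a \<Rightarrow> bool) \<Rightarrow> (nat \<Rightarrow> nat) \<Rightarrow> (nat \<Rightarrow> nat) \<Rightarrow> nat \<Rightarrow> bool" where
  "distance_regular_ia E b c D \<longleftrightarrow>
     simple_graph E \<and> connected_graph E \<and>
     (\<forall>x y. gdist E x y \<le> D) \<and> (\<exists>x y. gdist E x y = D) \<and>
     (\<forall>x y i. gdist E x y = i \<and> i < D \<longrightarrow>
        card {z. E y z \<and> gdist E x z = i + 1} = b i) \<and>
     (\<forall>x y i. gdist E x y = i \<and> 1 \<le> i \<and> i \<le> D \<longrightarrow>
        card {z. E y z \<and> gdist E x z = i - 1} = c i)"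

text \<open>Taylor graph: intersection array {k, b, 1; 1, b, k} with b < k - 1, D = 3.\<close>
definition taylor_graph :: "('a::finite \<Rightarrow> 'a \<Rightarrow> bool) \<Rightarrow> bool" where
  "taylor_graph E \<longleftrightarrow> (\<exists>k bb::nat. bb < k - 1 \<and>
     distance_regular_ia E
       (\<lambda>i. if i = 0 then k else if i = 1 then bb else 1)
       (\<lambda>i. if i = 1 then 1 else if i = 2 then bb else k) 3)"

definition adj_matrix :: "('a::finite \<Rightarrow> 'a \<Rightarrow> bool) \<Rightarrow> complex^'a^'a" where
  "adj_matrix E = (\<chi> y z. if E y z then 1 else 0)"

definition dual_idem :: "('a::finite \<Rightarrow> 'a \<Rightarrow> bool) \<Rightarrow> 'a \<Rightarrow> nat \<Rightarrow> complex^'a^'a" where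
  "dual_idem E x i = (\<chi> y z. if y = z \<and> gdist E x y = i then 1 else 0)"

definition cmat_scale :: "complex \<Rightarrow> complex^'a^'a \<Rightarrow> complex^'a^'a" where
  "cmat_scale c M = (\<chi> i j. c * M $ i $ j)"

inductive_set gen_algebra :: "(complex^'a::finite^'a) set \<Rightarrow> (complex^'a^'a) set"
  for S where
    gen: "M \<in> S \<Longrightarrow> M \<in> gen_algebra S"
  | one: "mat 1 \<in> gen_algebra S"
  | add: "M \<in> gen_algebra S \<Longrightarrow> N \<in> gen_algebra S \<Longrightarrow> M + N \<in> gen_algebra S"
  | scale: "M \<in> gen_algebra S \<Longrightarrow> cmat_scale c M \<in> gen_algebra S"
  | mult: "M \<in> gen_algebra S \<Longrightarrow> N \<in> gen_algebra S \<Longrightarrow> M ** N \<in> gen_algebra S"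

definition terwilliger :: "('a::finite \<Rightarrow> 'a \<Rightarrow> bool) \<Rightarrow> nat \<Rightarrow> 'a \<Rightarrow> (complex^'a^'a) set" where
  "terwilliger E D x = gen_algebra (insert (adj_matrix E) {dual_idem E x i | i. i \<le> D})"

definition calg_iso ::
  "(complex^'a::finite^'a \<Rightarrow> complex^'a^'a) \<Rightarrow> (complex^'a^'a) set \<Rightarrow> (complex^'a^'a) set \<Rightarrow> bool" where
  "calg_iso \<phi> T T' \<longleftrightarrow> bij_betw \<phi> T T' \<and>
     (\<forall>M\<in>T. \<forall>N\<in>T. \<phi> (M + N) = \<phi> M + \<phi> N \<and> \<phi> (M ** N) = \<phi> M ** \<phi> N) \<and>
     (\<forall>M\<in>T. \<forall>c. \<phi> (cmat_scale c M) = cmat_scale c (\<phi> M)) \<and>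
     \<phi> (mat 1) = mat 1"

definition clinear_vec :: "(complex^'a \<Rightarrow> complex^'a) \<Rightarrow> bool" where
  "clinear_vec \<rho> \<longleftrightarrow> (\<forall>u v. \<rho> (u + v) = \<rho> u + \<rho> v) \<and> (\<forall>c v. \<rho> (c *s v) = c *s \<rho> v)"

definition pseudo_vertex_transitive :: "('a::finite \<Rightarrow> 'a \<Rightarrow> bool) \<Rightarrow> nat \<Rightarrow> bool" where
  "pseudo_vertex_transitive E D \<longleftrightarrow> (\<forall>x y.
     (\<exists>\<phi>. calg_iso \<phi> (terwilliger E D x) (terwilliger E D y) \<and>
          \<phi> (adj_matrix E) = adj_matrix E \<and>
          (\<forall>i\<le>D. \<phi> (dual_idem E x i) = dual_idem E y i)) \<and>
     (\<exists>\<rho>. clinear_vec \<rho> \<and> bij \<rho> \<and>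
          (\<forall>v. \<rho> (adj_matrix E *v v) = adj_matrix E *v \<rho> v) \<and>
          (\<forall>i\<le>D. \<forall>v. \<rho> (dual_idem E x i *v v) = dual_idem E y i *v \<rho> v)))"

end

theory Submission
  imports Defs
begin

(* Every vertex w of a Taylor graph has a unique antipode w' at distance 3, and w |-> w' is an
  automorphism. Its permutation matrix P (antipodal) commutes with the adjacency matrix A and
  splits V into odd (P v = -v) and even (P v = v) vectors. As the graph is an antipodal double
  cover of the complete graph on k + 1 vertices, A + A P = J - I - P; so on even vectors A acts
  through the all-ones functional alone, while on odd vectors A^2 = (k - 1 - 2b) A + k I.
  Each E*_i(x) is a combination of the projection F_x (pair_proj x) onto span {e_x, e_x'} and
  the sign matrix S_x (sign_diag x), which is +1 at distance at most 1 from x and -1 elsewhere;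
  S_x anticommutes with P, so it exchanges odd and even vectors.

  The odd vectors a_x = e_x - e_x' and a_y (pole_diff) have the same length and <a, A a> = 0
  for both, so the product H (swap x y) of the reflections in the two A-eigencomponents of
  a_x - a_y exchanges a_x and a_y and commutes with A and P. The map R (intertwiner x y) acting
  as H on odd vectors and as S_y H S_x on even vectors then intertwines A with A, S_x with S_y
  and F_x with F_y, hence E*_i(x) with E*_i(y); its inverse is the same construction for (y, x).
  Conjugation by R is the required algebra isomorphism T(x) -> T(y), and R itself the required
  bijection of V. *)

section \<open>Distances in connected graphs\<close>

lemma symp_relpowp:
  assumes "symp E"
  shows "symp (E ^^ n)"
proof (induction n)
  case 0 then show ?case by (simp add: symp_def)
next
  case (Suc n)
  show ?case
  proof (rule sympI)
    fix x y assume "(E ^^ Suc n) x y"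
    then obtain z where "(E ^^ n) x z" "E z y" by auto
    then show "(E ^^ Suc n) y x"
      using Suc.IH assms by (meson relpowp_Suc_I2 sympD)
  qed
qed

lemma gdist_sym: "symp E \<Longrightarrow> gdist E x y = gdist E y x"
  unfolding gdist_def by (metis symp_relpowp sympD)

lemma gdist_le: "(E ^^ n) x y \<Longrightarrow> gdist E x y \<le> n"
  unfolding gdist_def by (rule Least_le)

lemma gdist_walk: "connected_graph E \<Longrightarrow> (E ^^ gdist E x y) x y"
  unfolding gdist_def connected_graph_def by (rule LeastI_ex) blast

lemma gdist_eq_0_iff: "connected_graph E \<Longrightarrow> gdist E x y = 0 \<longleftrightarrow> x = y"
  using gdist_walk[of E x y] gdist_le[where n=0] by auto

lemma gdist_eq_1_iff:
  assumes "simple_graph E" "connected_graph E"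
  shows "gdist E x y = 1 \<longleftrightarrow> E x y"
proof
  assume "gdist E x y = 1"
  then show "E x y" using gdist_walk[OF assms(2), of x y] by (simp add: relcompp_apply)
next
  assume "E x y"
  moreover have "x \<noteq> y" using \<open>E x y\<close> assms(1) by (auto simp: simple_graph_def)
  ultimately show "gdist E x y = 1"
    using gdist_le[where n=1 and E=E and x=x and y=y] gdist_eq_0_iff[OF assms(2), of x y]
    by (simp add: relcompp_apply)
qed

lemma gdist_adjacent_le:
  "connected_graph E \<Longrightarrow> E y z \<Longrightarrow> gdist E x z \<le> gdist E x y + 1"
  using gdist_le[where n="Suc (gdist E x y)" and E=E and x=x and y=z] gdist_walk[of E x y] by auto

lemma gdist_SucE:
  assumes "connected_graph E" "gdist E x y = Suc n"
  obtains z where "E z y" "gdist E x z = n"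
proof -
  obtain z where z: "(E ^^ n) x z" "E z y"
    using gdist_walk[OF assms(1), of x y] assms(2) by auto
  then have "gdist E x z = n"
    using gdist_le[OF z(1)] gdist_adjacent_le[OF assms(1) z(2), of x] assms(2) by simp
  with z(2) show thesis by (rule that)
qed

lemma sum_card_swap:
  fixes R :: "'a::finite \<Rightarrow> 'b::finite \<Rightarrow> bool"
  shows "(\<Sum>u | P u. card {z. R u z \<and> Q z}) = (\<Sum>z | Q z. card {u. R u z \<and> P u})"
  using sum.swap_restrict[of "{u. P u}" "{z. Q z}" "\<lambda>_ _. 1::nat" R]
  by (simp add: conj_commute)


section \<open>Real matrices and reflections\<close>

definition diag_mat :: "('n::finite \<Rightarrow> 'a::zero) \<Rightarrow> 'a^'n^'n" where
  "diag_mat f = (\<chi> i j. if i = j then f i else 0)"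

lemma diag_mat_mult_nth [simp]: "(diag_mat f *v v) $ i = f i * v $ i"
proof -
  have "(\<Sum>j\<in>UNIV. (if i = j then f i else 0) * v $ j) = f i * v $ i"
    by (simp add: if_distrib[of "\<lambda>t. t * _"] cong: if_cong)
  then show ?thesis by (simp add: diag_mat_def matrix_vector_mult_def)
qed

lemma transpose_diag_mat [simp]: "transpose (diag_mat f) = diag_mat f"
  by (simp add: vec_eq_iff transpose_def diag_mat_def)

lemma inner_matrix_vector_mult_symmetric:
  "transpose M = M \<Longrightarrow> inner u (M *v v) = inner (M *v u) (v::real^'n)"
  by (metis dot_lmul_matrix transpose_matrix_vector)

lemma matrix_vector_mult_uminus: "M *v (- v) = - (M *v (v::'a::ring_1^'n))"
  using matrix_vector_mult_diff_distrib[of M 0 v] by simp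

definition householder :: "real^'n \<Rightarrow> real^'n^'n" where
  "householder w = mat 1 - (2 / inner w w) *\<^sub>R (\<chi> i j. w $ i * w $ j)"

lemma householder_mult: "householder w *v u = u - (2 * inner w u / inner w w) *\<^sub>R w"
proof -
  have "(\<chi> i j. w $ i * w $ j) *v u = inner w u *\<^sub>R w"
    by (simp add: vec_eq_iff matrix_vector_mult_def inner_vec_def sum_distrib_left
        mult.commute mult.left_commute)
  then show ?thesis
    by (simp add: householder_def matrix_vector_mult_diff_rdistrib
        scaleR_matrix_vector_assoc[symmetric])
qed

lemma householder_uminus [simp]: "householder (- w) = householder w"
  by (simp add: householder_def)

lemma householder_self: "householder w *v w = - w"
  by (cases "w = 0") (simp_all add: householder_mult scaleR_2)

lemma householder_orthogonal: "inner w u = 0 \<Longrightarrow> householder w *v u = u"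
  by (simp add: householder_mult)

lemma inner_householder: "inner w (householder w *v u) = - inner w u"
  by (cases "w = 0") (simp_all add: householder_mult inner_diff_right)

lemma householder_involution: "householder w *v (householder w *v u) = u"
  by (simp add: householder_mult[of w "householder w *v u"] inner_householder)
     (simp add: householder_mult)

lemma inner_householder_symmetric:
  "inner u (householder w *v v) = inner (householder w *v u) v"
  by (simp add: householder_mult inner_diff_left inner_diff_right inner_commute)

lemma householder_commute:
  assumes "transpose M = M" "M *v w = t *\<^sub>R w"
  shows "householder w *v (M *v u) = M *v (householder w *v u)"
proof -
  have "inner w (M *v u) = t * inner w u"
    using inner_matrix_vector_mult_symmetric[OF assms(1), of w u] assms(2) by simp
  then show ?thesis
    by (simp add: householder_mult matrix_vector_mult_diff_distrib matrix_vector_mult_scaleR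
        assms(2))
qed

lemma householders_commute:
  assumes "inner w w' = 0"
  shows "householder w *v (householder w' *v u) = householder w' *v (householder w *v u)"
  using assms
  by (simp add: householder_mult inner_diff_right inner_commute[of w' w] algebra_simps)

lemma householder_pair_swap:
  assumes "inner w w' = 0" "w + w' = a - a'" "inner w (a + a') = 0" "inner w' (a + a') = 0"
  shows "householder w *v (householder w' *v a) = a'"
proof -
  have "householder w *v (householder w' *v (w + w')) = - (w + w')"
    using assms(1) by (simp add: matrix_vector_right_distrib matrix_vector_mult_diff_distrib
        householder_self householder_orthogonal inner_commute matrix_vector_mult_uminus)
  moreover have "householder w *v (householder w' *v (a + a')) = a + a'"
    using assms(3,4) by (simp add: householder_orthogonal)
  moreover have "(w + w') + (a + a') = 2 *\<^sub>R a" "- (w + w') + (a + a') = 2 *\<^sub>R a'"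
    using assms(2) by (simp_all add: scaleR_2 algebra_simps)
  ultimately have "2 *\<^sub>R (householder w *v (householder w' *v a)) = 2 *\<^sub>R a'"
    by (metis matrix_vector_mult_scaleR matrix_vector_right_distrib)
  then show ?thesis by simp
qed

definition eigen_component :: "real^'n^'n \<Rightarrow> real^'n \<Rightarrow> real \<Rightarrow> real \<Rightarrow> real^'n" where
  "eigen_component M v t t' = (1 / (t - t')) *\<^sub>R (M *v v - t' *\<^sub>R v)"

lemma eigen_component_eigenvector:
  assumes "M *v (M *v v) = (t + t') *\<^sub>R (M *v v) - (t * t') *\<^sub>R v"
  shows "M *v eigen_component M v t t' = t *\<^sub>R eigen_component M v t t'"
  by (simp add: eigen_component_def matrix_vector_mult_scaleR matrix_vector_mult_diff_distrib
      assms algebra_simps)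

lemma eigen_component_sum: "t \<noteq> t' \<Longrightarrow> eigen_component M v t t' + eigen_component M v t' t = v"
proof -
  assume "t \<noteq> t'"
  have "1 / (t' - t) = - (1 / (t - t'))" by (simp add: divide_simps)
  then have "eigen_component M v t' t = (1 / (t - t')) *\<^sub>R (t *\<^sub>R v - M *v v)"
    by (simp add: eigen_component_def algebra_simps)
  then have "eigen_component M v t t' + eigen_component M v t' t
      = (1 / (t - t')) *\<^sub>R ((t - t') *\<^sub>R v)"
    by (simp add: eigen_component_def algebra_simps flip: scaleR_right_distrib)
  with \<open>t \<noteq> t'\<close> show ?thesis by simp
qed

lemma eigen_component_uminus: "eigen_component M (- v) t t' = - eigen_component M v t t'"
  by (simp add: eigen_component_def matrix_vector_mult_uminus algebra_simps)

lemma eigen_component_commute: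
  assumes "N *v v = c *\<^sub>R v" "\<And>u. N *v (M *v u) = M *v (N *v u)"
  shows "N *v eigen_component M v t t' = c *\<^sub>R eigen_component M v t t'"
  by (simp add: eigen_component_def matrix_vector_mult_scaleR matrix_vector_mult_diff_distrib
      assms algebra_simps)

lemma inner_eigen_component:
  "inner v s = 0 \<Longrightarrow> inner (M *v v) s = 0 \<Longrightarrow> inner (eigen_component M v t t') s = 0"
  by (simp add: eigen_component_def inner_diff_left)

lemma eigenvectors_orthogonal:
  fixes M :: "real^'n^'n"
  assumes "transpose M = M" "M *v w = t *\<^sub>R w" "M *v w' = t' *\<^sub>R w'" "t \<noteq> t'"
  shows "inner w w' = 0"
proof -
  have "t * inner w w' = t' * inner w w'"
    using inner_matrix_vector_mult_symmetric[OF assms(1), of w w'] assms(2,3) by auto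
  with assms(4) show ?thesis by simp
qed


section \<open>Conjugation of generated algebras\<close>

lemma matrix_add_rdistrib: "(A + B) ** C = A ** C + B ** (C::'a::semiring_1^'n^'m)"
  by (simp add: vec_eq_iff matrix_matrix_mult_def sum.distrib distrib_right)

lemma matrix_vector_mult_smult: "M *v (c *s v) = c *s (M *v (v::'a::comm_semiring_1^'n))"
  by (simp add: vec_eq_iff matrix_vector_mult_def sum_distrib_left mult.left_commute)

lemma cmat_scale_mult_left: "cmat_scale c M ** N = cmat_scale c (M ** N)"
  and cmat_scale_mult_right: "M ** cmat_scale c N = cmat_scale c (M ** N)"
  by (simp_all add: vec_eq_iff cmat_scale_def matrix_matrix_mult_def sum_distrib_left
      mult.assoc mult.left_commute)

lemma map_matrix_of_real_mult:
  "map_matrix of_real (M ** N)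
    = map_matrix of_real M ** (map_matrix of_real N :: 'a::real_algebra_1^_^_)"
  by (simp add: vec_eq_iff matrix_matrix_mult_def)

lemma map_matrix_of_real_mat_1: "map_matrix of_real (mat 1) = (mat 1 :: 'a::real_algebra_1^'n^'n)"
  by (simp add: vec_eq_iff mat_def)

lemma gen_algebra_image:
  assumes "M \<in> gen_algebra S"
    and "\<And>M N. f (M + N) = f M + f N" "\<And>M N. f (M ** N) = f M ** f N"
    and "\<And>c M. f (cmat_scale c M) = cmat_scale c (f M)" "f (mat 1) = mat 1"
    and "\<And>M. M \<in> S \<Longrightarrow> f M \<in> gen_algebra S'"
  shows "f M \<in> gen_algebra S'"
  using assms(1) by induction (simp_all add: assms(2-) gen_algebra.intros)

lemma conjugation_hom:
  fixes C C' :: "complex^'n^'n"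
  assumes "C' ** C = mat 1"
  shows "C ** (M + N) ** C' = C ** M ** C' + C ** N ** C'"
    and "C ** (M ** N) ** C' = (C ** M ** C') ** (C ** N ** C')"
    and "C ** cmat_scale c M ** C' = cmat_scale c (C ** M ** C')"
proof -
  show "C ** (M + N) ** C' = C ** M ** C' + C ** N ** C'"
    by (simp add: matrix_add_ldistrib matrix_add_rdistrib)
  have "(C ** M ** C') ** (C ** N ** C') = C ** M ** (C' ** C) ** N ** C'"
    by (simp add: matrix_mul_assoc)
  then show "C ** (M ** N) ** C' = (C ** M ** C') ** (C ** N ** C')"
    by (simp add: assms matrix_mul_assoc)
  show "C ** cmat_scale c M ** C' = cmat_scale c (C ** M ** C')"
    by (simp add: cmat_scale_mult_left cmat_scale_mult_right)
qed

lemma calg_iso_conjugation: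
  fixes C C' :: "complex^'n::finite^'n"
  assumes inv: "C ** C' = mat 1" "C' ** C = mat 1"
    and gens: "\<And>M. M \<in> S \<Longrightarrow> C ** M ** C' \<in> gen_algebra S'"
      "\<And>M. M \<in> S' \<Longrightarrow> C' ** M ** C \<in> gen_algebra S"
  shows "calg_iso (\<lambda>M. C ** M ** C') (gen_algebra S) (gen_algebra S')"
proof -
  have back_forth: "C' ** (C ** M ** C') ** C = M" "C ** (C' ** M ** C) ** C' = M" for M
    by (simp_all add: matrix_mul_assoc inv) (simp_all add: matrix_mul_assoc[symmetric] inv)
  have "bij_betw (\<lambda>M. C ** M ** C') (gen_algebra S) (gen_algebra S')"
  proof (rule bij_betw_byWitness[where f'="\<lambda>M. C' ** M ** C"])
    show "(\<lambda>M. C ** M ** C') ` gen_algebra S \<subseteq> gen_algebra S'"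
      using gen_algebra_image[OF _ conjugation_hom[OF inv(2)] _ gens(1)] inv(1) by auto
    show "(\<lambda>M. C' ** M ** C) ` gen_algebra S' \<subseteq> gen_algebra S"
      using gen_algebra_image[OF _ conjugation_hom[OF inv(1)] _ gens(2)] inv(2) by auto
  qed (simp_all add: back_forth)
  then show ?thesis
    unfolding calg_iso_def by (simp add: conjugation_hom[OF inv(2)] inv(1))
qed

lemma conjugate_eq:
  assumes "C ** M = M' ** C" "C ** C' = mat 1"
  shows "C ** M ** C' = M'"
  by (simp add: assms matrix_mul_assoc[symmetric])

lemma pseudo_vertex_transitiveI:
  assumes "\<And>x y. \<exists>C C'. C ** C' = mat 1 \<and> C' ** C = mat 1 \<and>
      C ** adj_matrix E = adj_matrix E ** C \<and> (\<forall>i\<le>D. C ** dual_idem E x i = dual_idem E y i ** C)"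
  shows "pseudo_vertex_transitive E D"
  unfolding pseudo_vertex_transitive_def
proof (intro allI conjI)
  fix x y
  obtain C C' where inv: "C ** C' = mat 1" "C' ** C = mat 1"
    and adj: "C ** adj_matrix E = adj_matrix E ** C"
    and dual: "\<And>i. i \<le> D \<Longrightarrow> C ** dual_idem E x i = dual_idem E y i ** C"
    using assms by blast
  have adj': "C' ** adj_matrix E = adj_matrix E ** C'"
    and dual': "\<And>i. i \<le> D \<Longrightarrow> C' ** dual_idem E y i = dual_idem E x i ** C'"
    using conjugate_eq[OF adj inv(1)] conjugate_eq[OF dual inv(1)]
    by (metis inv(2) matrix_mul_assoc matrix_mul_lid matrix_mul_rid)+
  have "calg_iso (\<lambda>M. C ** M ** C') (terwilliger E D x) (terwilliger E D y)"
    unfolding terwilliger_def using inv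
  proof (rule calg_iso_conjugation)
    show "C ** M ** C' \<in> gen_algebra (insert (adj_matrix E) {dual_idem E y i |i. i \<le> D})"
      if "M \<in> insert (adj_matrix E) {dual_idem E x i |i. i \<le> D}" for M
      using that conjugate_eq[OF adj inv(1)] conjugate_eq[OF dual inv(1)]
      by (auto intro: gen_algebra.gen)
    show "C' ** M ** C \<in> gen_algebra (insert (adj_matrix E) {dual_idem E x i |i. i \<le> D})"
      if "M \<in> insert (adj_matrix E) {dual_idem E y i |i. i \<le> D}" for M
      using that conjugate_eq[OF adj' inv(2)] conjugate_eq[OF dual' inv(2)]
      by (auto intro: gen_algebra.gen)
  qed
  then show "\<exists>\<phi>. calg_iso \<phi> (terwilliger E D x) (terwilliger E D y) \<and>
      \<phi> (adj_matrix E) = adj_matrix E \<and> (\<forall>i\<le>D. \<phi> (dual_idem E x i) = dual_idem E y i)"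
    using conjugate_eq[OF adj inv(1)] conjugate_eq[OF dual inv(1)] by blast
  have "bij (\<lambda>v. C *v v)"
    by (rule o_bij[where g="\<lambda>v. C' *v v"]) (simp_all add: fun_eq_iff matrix_vector_mul_assoc inv)
  then show "\<exists>\<rho>. clinear_vec \<rho> \<and> bij \<rho> \<and> (\<forall>v. \<rho> (adj_matrix E *v v) = adj_matrix E *v \<rho> v) \<and>
      (\<forall>i\<le>D. \<forall>v. \<rho> (dual_idem E x i *v v) = dual_idem E y i *v \<rho> v)"
    by (intro exI[of _ "\<lambda>v. C *v v"])
       (simp add: clinear_vec_def matrix_vector_right_distrib matrix_vector_mult_smult
         matrix_vector_mul_assoc adj dual)
qed

section \<open>Taylor graphs\<close>

locale taylor =
  fixes E :: "'a::finite \<Rightarrow> 'a \<Rightarrow> bool" and k b :: nat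
  assumes b_less: "b < k - 1"
    and distance_regular: "distance_regular_ia E
       (\<lambda>i. if i = 0 then k else if i = 1 then b else 1)
       (\<lambda>i. if i = 1 then 1 else if i = 2 then b else k) 3"
begin

abbreviation "d \<equiv> gdist E"

definition b_num :: "nat \<Rightarrow> nat" where
  "b_num i = (if i = 0 then k else if i = 1 then b else 1)"

definition c_num :: "nat \<Rightarrow> nat" where
  "c_num i = (if i = 1 then 1 else if i = 2 then b else k)"

lemma simple: "simple_graph E"
  and connected: "connected_graph E"
  and dist_le_3: "d x y \<le> 3"
  and dist_3_exists: "\<exists>x y. d x y = 3"
  using distance_regular unfolding distance_regular_ia_def by auto

lemma card_neighbours_further: "d x y = i \<Longrightarrow> i < 3 \<Longrightarrow> card {z. E y z \<and> d x z = i + 1} = b_num i"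
  using distance_regular unfolding distance_regular_ia_def b_num_def by (elim conjE) blast

lemma card_neighbours_closer:
  "d x y = i \<Longrightarrow> 1 \<le> i \<Longrightarrow> i \<le> 3 \<Longrightarrow> card {z. E y z \<and> d x z = i - 1} = c_num i"
  using distance_regular unfolding distance_regular_ia_def c_num_def by (elim conjE) blast

lemma symmetric: "E x y \<longleftrightarrow> E y x" and irreflexive: "\<not> E x x"
  using simple by (auto simp: simple_graph_def)

lemma dist_sym: "d x y = d y x"
  by (rule gdist_sym) (simp add: sympI symmetric)

lemma dist_eq_0_iff: "d x y = 0 \<longleftrightarrow> x = y"
  by (rule gdist_eq_0_iff[OF connected])

lemma dist_self [simp]: "d x x = 0"
  by (simp add: dist_eq_0_iff)

lemma dist_eq_1_iff: "d x y = 1 \<longleftrightarrow> E x y"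
  by (rule gdist_eq_1_iff[OF simple connected])

lemma dist_adjacent_le: "E y z \<Longrightarrow> d x z \<le> d x y + 1"
  by (rule gdist_adjacent_le[OF connected])

lemma degree: "card {z. E y z} = k"
  using card_neighbours_further[of y y 0] dist_eq_1_iff by (simp add: b_num_def)

lemma b_pos: "b \<ge> 1"
proof -
  obtain x y where "d x y = 3" using dist_3_exists by blast
  then obtain z where z: "E z y" "d x z = 2" using gdist_SucE[OF connected, of x y 2] by auto
  then obtain u where u: "E u z" "d x u = 1" using gdist_SucE[OF connected, of x z 1] by auto
  have "card {w. E z w \<and> d x w = 1} = b"
    using card_neighbours_closer[of x z 2] z by (simp add: c_num_def)
  moreover have "u \<in> {w. E z w \<and> d x w = 1}" using u symmetric by auto
  ultimately show ?thesis by (metis card_0_eq empty_iff finite less_one not_le)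
qed

lemma card_sphere_Suc:
  assumes "i < 3" "j = i + 1"
  shows "card {u. d x u = i} * b_num i = card {z. d x z = j} * c_num j"
proof -
  have "(\<Sum>u | d x u = i. card {z. E u z \<and> d x z = j})
      = (\<Sum>z | d x z = j. card {u. E z u \<and> d x u = i})"
    using sum_card_swap[where P="\<lambda>u. d x u = i" and R=E and Q="\<lambda>z. d x z = j"]
    by (simp add: symmetric)
  moreover have "(\<Sum>u | d x u = i. card {z. E u z \<and> d x z = j}) = (\<Sum>u | d x u = i. b_num i)"
    using card_neighbours_further[of x _ i] assms by simp
  moreover have "(\<Sum>z | d x z = j. card {u. E z u \<and> d x u = i}) = (\<Sum>z | d x z = j. c_num j)"
    using card_neighbours_closer[of x _ j] assms by simp
  ultimately show ?thesis by simp
qed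

lemma card_sphere_1: "card {z. d x z = 1} = k"
  using degree[of x] dist_eq_1_iff by simp

lemma card_sphere_2: "card {z. d x z = 2} = k"
proof -
  have "card {u. d x u = 1} * b_num 1 = card {z. d x z = 2} * c_num 2"
    by (rule card_sphere_Suc) simp_all
  then have "k * b = card {z. d x z = 2} * b"
    unfolding card_sphere_1 by (simp add: b_num_def c_num_def)
  then show ?thesis using b_pos by (metis mult_right_cancel not_one_le_zero)
qed

lemma card_sphere_3: "card {z. d x z = 3} = 1"
proof -
  have "card {u. d x u = 2} * b_num 2 = card {z. d x z = 3} * c_num 3"
    by (rule card_sphere_Suc) simp_all
  then have "1 * k = card {z. d x z = 3} * k"
    unfolding card_sphere_2 by (simp add: b_num_def c_num_def)
  moreover have "k \<noteq> 0" using b_less by linarith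
  ultimately show ?thesis by (metis mult_right_cancel)
qed

definition antipode :: "'a \<Rightarrow> 'a" where
  "antipode x = (THE z. d x z = 3)"

lemma dist_antipode: "d x (antipode x) = 3"
  and antipode_unique: "d x z = 3 \<Longrightarrow> z = antipode x"
proof -
  obtain w where w: "{z. d x z = 3} = {w}" using card_sphere_3[of x] by (rule card_1_singletonE)
  then have "antipode x = w" unfolding antipode_def by auto
  then show "d x (antipode x) = 3" and "d x z = 3 \<Longrightarrow> z = antipode x" using w by auto
qed

lemma antipode_antipode [simp]: "antipode (antipode x) = x"
  using dist_eq_0_iff antipode_unique[of "antipode x" x] dist_antipode[of x] dist_sym by auto

lemma antipode_inj [simp]: "antipode u = antipode w \<longleftrightarrow> u = w"
  by (metis antipode_antipode)

lemma antipode_neq [simp]: "antipode x \<noteq> x" "x \<noteq> antipode x"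
  using dist_antipode[of x] by (metis dist_eq_0_iff zero_neq_numeral)+

lemma neighbours_antipode: "{z. E (antipode x) z} = {z. d x z = 2}"
proof (rule card_subset_eq)
  show "{z. E (antipode x) z} \<subseteq> {z. d x z = 2}"
  proof
    fix z assume "z \<in> {z. E (antipode x) z}"
    then have "E z (antipode x)" "z \<noteq> antipode x" using symmetric irreflexive by auto
    then have "3 \<le> d x z + 1" "d x z \<noteq> 3"
      using dist_adjacent_le[of z "antipode x" x] dist_antipode[of x] antipode_unique[of x z]
      by auto
    then show "z \<in> {z. d x z = 2}" using dist_le_3[of x z] by simp
  qed
qed (simp_all add: degree card_sphere_2)

lemma adjacent_antipode_iff: "E (antipode x) z \<longleftrightarrow> d x z = 2"
  using neighbours_antipode by blast

lemma dist_antipode_left: "d (antipode x) z = 3 - d x z"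
proof -
  consider "d x z = 0" | "d x z = 1" | "d x z = 2" | "d x z = 3"
    using dist_le_3[of x z] by linarith
  then show ?thesis
  proof cases
    case 1
    then have "z = x" by (simp add: dist_eq_0_iff)
    then show ?thesis using 1 dist_antipode[of x] dist_sym[of "antipode x" x] by simp
  next
    case 2
    have "d (antipode x) z \<noteq> 0" using 2 dist_antipode[of x] dist_eq_0_iff[of "antipode x" z] by auto
    moreover have "d (antipode x) z \<noteq> 1"
      using 2 adjacent_antipode_iff[of x z] dist_eq_1_iff[of "antipode x" z] by simp
    moreover have "d (antipode x) z \<noteq> 3" using 2 antipode_unique[of "antipode x" z] by auto
    moreover have "d (antipode x) z \<le> 3" by (rule dist_le_3)
    ultimately show ?thesis using 2 by linarith
  next
    case 3
    then show ?thesis using adjacent_antipode_iff[of x z] dist_eq_1_iff[of "antipode x" z] by simp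
  next
    case 4
    then show ?thesis using antipode_unique[of x z] by simp
  qed
qed

lemma dist_antipode_right: "d z (antipode w) = 3 - d z w"
  using dist_antipode_left[of w z] dist_sym by metis

lemma adjacent_antipodes_iff [simp]: "E (antipode u) (antipode w) \<longleftrightarrow> E u w"
  using dist_antipode_left[of u "antipode w"] dist_antipode_right[of u w] dist_le_3[of u w]
  by (simp flip: dist_eq_1_iff)

lemma adjacent_antipode_right: "E w (antipode z) \<longleftrightarrow> d w z = 2"
  using dist_antipode_right[of w z] dist_le_3[of w z] by (auto simp flip: dist_eq_1_iff)

lemma dist_cases:
  obtains "d w z = 0" "z = w"
  | "d w z = 1" "E w z" "z \<noteq> w" "z \<noteq> antipode w"
  | "d w z = 2" "\<not> E w z" "z \<noteq> w" "z \<noteq> antipode w"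
  | "d w z = 3" "\<not> E w z" "z \<noteq> w" "z = antipode w"
proof -
  consider "d w z = 0" | "d w z = 1" | "d w z = 2" | "d w z = 3"
    using dist_le_3[of w z] by linarith
  then show thesis
  proof cases
    case 1
    moreover have "z = w" using 1 dist_eq_0_iff[of w z] by simp
    ultimately show thesis by (rule that(1))
  next
    case 2
    moreover have "E w z" using 2 dist_eq_1_iff[of w z] by simp
    moreover have "z \<noteq> w" "z \<noteq> antipode w" using 2 dist_antipode[of w] by auto
    ultimately show thesis by (rule that(2))
  next
    case 3
    moreover have "\<not> E w z" using 3 dist_eq_1_iff[of w z] by simp
    moreover have "z \<noteq> w" "z \<noteq> antipode w" using 3 dist_antipode[of w] by auto
    ultimately show thesis by (rule that(3))
  next
    case 4
    moreover have "\<not> E w z" using 4 dist_eq_1_iff[of w z] by simp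
    moreover have "z \<noteq> w" "z = antipode w" using 4 antipode_unique[of w z] by auto
    ultimately show thesis by (rule that(4))
  qed
qed

lemma card_common_neighbours: "card {u. E w u \<and> E u z} =
  (if d w z = 0 then k else if d w z = 1 then k - 1 - b else if d w z = 2 then b else 0)"
proof -
  have eq: "{u. E w u \<and> E u z} = {u. E z u \<and> d w u = 1}" using symmetric dist_eq_1_iff by auto
  consider "d w z = 0" | "d w z = 1" | "d w z = 2" | "d w z = 3"
    using dist_le_3[of w z] by linarith
  then show ?thesis
  proof cases
    case 1 then show ?thesis unfolding eq using dist_eq_0_iff degree[of w] dist_eq_1_iff by simp
  next
    case 2
    have neighbours_z: "{u. E z u}
        = {u. E z u \<and> d w u = 0} \<union> ({u. E z u \<and> d w u = 1} \<union> {u. E z u \<and> d w u = 2})"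
      using dist_adjacent_le[of z _ w] 2 by fastforce
    have "k = card {u. E z u \<and> d w u = 0}
        + (card {u. E z u \<and> d w u = 1} + card {u. E z u \<and> d w u = 2})"
      unfolding degree[of z, symmetric] neighbours_z by (simp add: card_Un_disjoint disjoint_iff)
    moreover have "card {u. E z u \<and> d w u = 0} = 1"
      using card_neighbours_closer[of w z 1] 2 by (simp add: c_num_def)
    moreover have "card {u. E z u \<and> d w u = 2} = b"
      using card_neighbours_further[of w z 1] 2 by (simp add: b_num_def numeral_2_eq_2)
    ultimately show ?thesis unfolding eq using 2 by simp
  next
    case 3
    then show ?thesis unfolding eq using card_neighbours_closer[of w z 2] by (simp add: c_num_def)
  next
    case 4
    have "\<not> (E z u \<and> d w u = 1)" for u
      using dist_adjacent_le[of u z w] symmetric[of z u] 4 by auto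
    then have "{u. E z u \<and> d w u = 1} = {}" by blast
    then show ?thesis unfolding eq using 4 by simp
  qed
qed


definition adjacency :: "real^'a^'a" where
  "adjacency = (\<chi> w z. if E w z then 1 else 0)"

definition antipodal :: "real^'a^'a" where
  "antipodal = (\<chi> w z. if z = antipode w then 1 else 0)"

definition sign_diag :: "'a \<Rightarrow> real^'a^'a" where
  "sign_diag x = diag_mat (\<lambda>w. if d x w \<le> 1 then 1 else -1)"

definition pair_proj :: "'a \<Rightarrow> real^'a^'a" where
  "pair_proj x = diag_mat (\<lambda>w. if w = x \<or> w = antipode x then 1 else 0)"

definition sphere_proj :: "'a \<Rightarrow> nat \<Rightarrow> real^'a^'a" where
  "sphere_proj x i = diag_mat (\<lambda>w. if d x w = i then 1 else 0)"

definition pole_diff :: "'a \<Rightarrow> real^'a" where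
  "pole_diff x = (\<chi> w. (if w = x then 1 else 0) - (if w = antipode x then 1 else 0))"

definition odd_proj :: "real^'a^'a" where
  "odd_proj = (1/2) *\<^sub>R (mat 1 - antipodal)"

lemma adjacency_mult_nth: "(adjacency *v v) $ w = (\<Sum>z\<in>UNIV. if E w z then v $ z else 0)"
  by (simp add: adjacency_def matrix_vector_mult_def if_distrib[of "\<lambda>t. t * _"] cong: if_cong)

lemma antipodal_mult_nth [simp]: "(antipodal *v v) $ w = v $ antipode w"
  by (simp add: antipodal_def matrix_vector_mult_def if_distrib[of "\<lambda>t. t * _"] cong: if_cong)

lemma sign_diag_mult_nth: "(sign_diag x *v v) $ w = (if d x w \<le> 1 then v $ w else - v $ w)"
  by (simp add: sign_diag_def)

lemma pair_proj_mult_nth: "(pair_proj x *v v) $ w = (if w = x \<or> w = antipode x then v $ w else 0)"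
  by (simp add: pair_proj_def)

lemma sphere_proj_mult_nth: "(sphere_proj x i *v v) $ w = (if d x w = i then v $ w else 0)"
  by (simp add: sphere_proj_def)

lemma pole_diff_nth:
  "pole_diff x $ w = (if w = x then 1 else 0) - (if w = antipode x then 1 else 0)"
  by (simp add: pole_diff_def)

lemma odd_proj_mult: "odd_proj *v v = (1/2) *\<^sub>R (v - antipodal *v v)"
  by (simp add: odd_proj_def scaleR_matrix_vector_assoc[symmetric] matrix_vector_mult_diff_rdistrib)

lemma transpose_adjacency: "transpose adjacency = adjacency"
  by (simp add: vec_eq_iff transpose_def adjacency_def symmetric)

lemma transpose_antipodal: "transpose antipodal = antipodal"
  by (auto simp: vec_eq_iff transpose_def antipodal_def)

lemma antipodal_involution: "antipodal *v (antipodal *v v) = v"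
  by (simp add: vec_eq_iff)

lemma sum_antipode: "(\<Sum>z\<in>UNIV. f (antipode z)) = (\<Sum>z\<in>UNIV. f z)"
  by (rule sum.reindex_bij_witness[where i=antipode and j=antipode]) auto

lemma adjacency_antipodal_mult_nth:
  "(adjacency *v (antipodal *v v)) $ w = (\<Sum>z\<in>UNIV. if E w (antipode z) then v $ z else 0)"
  using sum_antipode[of "\<lambda>z. if E w z then v $ antipode z else 0"]
  by (simp add: adjacency_mult_nth cong: if_cong)

lemma adjacency_antipodal_commute: "adjacency *v (antipodal *v v) = antipodal *v (adjacency *v v)"
proof -
  have "E w (antipode z) \<longleftrightarrow> E (antipode w) z" for w z
    using adjacent_antipodes_iff[of w "antipode z"] by simp
  then show ?thesis
    unfolding vec_eq_iff adjacency_antipodal_mult_nth by (simp add: adjacency_mult_nth)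
qed

text \<open>Each vertex w is adjacent to exactly one of z and antipode z, unless z is w or its
  antipode.\<close>

lemma adjacency_add_antipodal:
  "adjacency *v v + adjacency *v (antipodal *v v) = inner 1 v *\<^sub>R 1 - v - antipodal *v v"
proof -
  have pointwise: "(if E w z then v $ z else 0) + (if E w (antipode z) then v $ z else 0)
     = v $ z - (if z = w then v $ z else 0) - (if z = antipode w then v $ z else 0)" for w z
    by (rule dist_cases[of w z]) (auto simp: adjacent_antipode_right irreflexive)
  show ?thesis
    unfolding vec_eq_iff vector_add_component adjacency_antipodal_mult_nth
    by (simp add: adjacency_mult_nth inner_vec_def sum.distrib[symmetric] pointwise sum_subtractf)
qed

lemma adjacency_square:
  "adjacency *v (adjacency *v v) = real k *\<^sub>R v + (real k - 1 - real b) *\<^sub>R (adjacency *v v)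
    + real b *\<^sub>R (inner 1 v *\<^sub>R 1 - v - adjacency *v v - antipodal *v v)"
proof -
  have kb: "real (k - Suc b) = real k - 1 - real b" using b_less by auto
  have "(adjacency *v (adjacency *v v)) $ w
      = real k * v $ w + (real k - 1 - real b) * (adjacency *v v) $ w
        + real b * (inner 1 v - v $ w - (adjacency *v v) $ w - v $ antipode w)" for w
  proof -
    have "(adjacency *v (adjacency *v v)) $ w
        = (\<Sum>u\<in>UNIV. \<Sum>z\<in>UNIV. if E w u \<and> E u z then v $ z else 0)"
      unfolding adjacency_mult_nth by (intro sum.cong refl) auto
    also have "\<dots> = (\<Sum>z\<in>UNIV. real (card {u. E w u \<and> E u z}) * v $ z)"
      by (subst sum.swap) (simp add: sum.If_cases)
    also have "\<dots> = (\<Sum>z\<in>UNIV. real k * (if z = w then v $ z else 0)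
        + (real k - 1 - real b) * (if E w z then v $ z else 0)
        + real b * (v $ z - (if z = w then v $ z else 0) - (if E w z then v $ z else 0)
                    - (if z = antipode w then v $ z else 0)))"
      by (rule sum.cong, simp, rule dist_cases[of w])
         (auto simp: card_common_neighbours kb irreflexive algebra_simps)
    finally show ?thesis
      by (simp add: sum.distrib sum_subtractf adjacency_mult_nth inner_vec_def
          flip: sum_distrib_left)
  qed
  then show ?thesis by (simp add: vec_eq_iff algebra_simps)
qed

lemma sign_diag_antipodal: "sign_diag x *v (antipodal *v v) = - (antipodal *v (sign_diag x *v v))"
  using dist_le_3 by (auto simp: vec_eq_iff sign_diag_mult_nth dist_antipode_right)

lemma pair_proj_antipodal: "pair_proj x *v (antipodal *v v) = antipodal *v (pair_proj x *v v)"
  by (auto simp: vec_eq_iff pair_proj_mult_nth)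

lemma sign_diag_involution: "sign_diag x *v (sign_diag x *v v) = v"
  by (simp add: vec_eq_iff sign_diag_mult_nth)

lemma sign_diag_pair_proj: "sign_diag x *v (pair_proj x *v v) = pair_proj x *v (sign_diag x *v v)"
  by (simp add: vec_eq_iff sign_diag_mult_nth pair_proj_mult_nth)

lemma inner_pole_diff: "inner (pole_diff x) v = v $ x - v $ antipode x"
proof -
  have "inner (pole_diff x) v
      = (\<Sum>z\<in>UNIV. (if z = x then v $ z else 0) - (if z = antipode x then v $ z else 0))"
    by (simp add: inner_vec_def pole_diff_nth left_diff_distrib if_distrib[of "\<lambda>t. t * _"]
        cong: if_cong)
  then show ?thesis by (simp add: sum_subtractf)
qed

lemma adjacency_pole_diff_nth:
  "(adjacency *v pole_diff x) $ w = (if E w x then 1 else 0) - (if E w (antipode x) then 1 else 0)"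
  using inner_pole_diff[of x "adjacency $ w"]
  by (simp add: matrix_vector_mul_component inner_commute adjacency_def)

lemma sign_diag_ones: "sign_diag x *v 1 = adjacency *v pole_diff x + pole_diff x"
proof -
  have "(sign_diag x *v 1) $ w = (adjacency *v pole_diff x + pole_diff x) $ w" for w
    unfolding vector_add_component sign_diag_mult_nth adjacency_pole_diff_nth pole_diff_nth
      one_index
    by (rule dist_cases[of x w])
       (auto simp: adjacent_antipode_right symmetric[of w] dist_sym[of w] irreflexive
         adjacent_antipode_iff)
  then show ?thesis by (simp add: vec_eq_iff)
qed

lemma inner_pole_diff_adjacency: "inner (pole_diff x) (adjacency *v pole_diff x) = 0"
  by (simp add: inner_pole_diff adjacency_pole_diff_nth irreflexive adjacent_antipode_iff
      adjacent_antipode_right)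

lemma inner_pole_diff_self: "inner (pole_diff x) (pole_diff x) = 2"
  by (simp add: inner_pole_diff pole_diff_nth)

lemma antipodal_pole_diff: "antipodal *v pole_diff x = - pole_diff x"
  by (auto simp: vec_eq_iff pole_diff_nth)

lemma antipodal_ones: "antipodal *v 1 = 1"
  by (simp add: vec_eq_iff)

lemma inner_adjacency: "inner u (adjacency *v v) = inner (adjacency *v u) v"
  by (rule inner_matrix_vector_mult_symmetric[OF transpose_adjacency])

lemma inner_antipodal: "inner u (antipodal *v v) = inner (antipodal *v u) v"
  by (rule inner_matrix_vector_mult_symmetric[OF transpose_antipodal])

lemma inner_sign_diag: "inner u (sign_diag x *v v) = inner (sign_diag x *v u) v"
  by (simp add: inner_matrix_vector_mult_symmetric sign_diag_def)

lemma sphere_proj_0: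
  "sphere_proj x 0 *v v = (1/2) *\<^sub>R (pair_proj x *v v + pair_proj x *v (sign_diag x *v v))"
  unfolding vec_eq_iff by (rule allI, rule dist_cases[of x])
    (auto simp: sphere_proj_mult_nth pair_proj_mult_nth sign_diag_mult_nth dist_antipode)

lemma sphere_proj_1:
  "sphere_proj x 1 *v v = (1/2) *\<^sub>R ((v - pair_proj x *v v)
      + (sign_diag x *v v - pair_proj x *v (sign_diag x *v v)))"
  unfolding vec_eq_iff by (rule allI, rule dist_cases[of x])
    (auto simp: sphere_proj_mult_nth pair_proj_mult_nth sign_diag_mult_nth dist_antipode)

lemma sphere_proj_2:
  "sphere_proj x 2 *v v = (1/2) *\<^sub>R ((v - pair_proj x *v v)
      - (sign_diag x *v v - pair_proj x *v (sign_diag x *v v)))"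
  unfolding vec_eq_iff by (rule allI, rule dist_cases[of x])
    (auto simp: sphere_proj_mult_nth pair_proj_mult_nth sign_diag_mult_nth dist_antipode)

lemma sphere_proj_3:
  "sphere_proj x 3 *v v = (1/2) *\<^sub>R (pair_proj x *v v - pair_proj x *v (sign_diag x *v v))"
  unfolding vec_eq_iff by (rule allI, rule dist_cases[of x])
    (auto simp: sphere_proj_mult_nth pair_proj_mult_nth sign_diag_mult_nth dist_antipode)

lemma odd_proj_antipodal: "odd_proj *v (antipodal *v u) = - (odd_proj *v u)"
  and antipodal_odd_proj: "antipodal *v (odd_proj *v u) = - (odd_proj *v u)"
  and odd_proj_idem: "odd_proj *v (odd_proj *v u) = odd_proj *v u"
  by (simp_all add: vec_eq_iff odd_proj_mult field_simps)

lemma odd_proj_odd: "antipodal *v u = - u \<Longrightarrow> odd_proj *v u = u"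
  and odd_proj_even: "antipodal *v u = u \<Longrightarrow> odd_proj *v u = 0"
  by (simp_all add: odd_proj_mult)

lemma odd_proj_adjacency: "odd_proj *v (adjacency *v u) = adjacency *v (odd_proj *v u)"
  by (simp add: odd_proj_mult adjacency_antipodal_commute matrix_vector_mult_diff_distrib
      matrix_vector_mult_scaleR)

lemma odd_proj_pair_proj: "odd_proj *v (pair_proj x *v u) = pair_proj x *v (odd_proj *v u)"
  by (simp add: odd_proj_mult pair_proj_antipodal matrix_vector_mult_diff_distrib
      matrix_vector_mult_scaleR)

lemma inner_odd_proj: "inner u (odd_proj *v v) = inner (odd_proj *v u) v"
  by (simp add: odd_proj_mult inner_diff_right inner_diff_left inner_antipodal)

lemma pair_proj_odd_proj:
  "pair_proj x *v (odd_proj *v v) = (inner (pole_diff x) v / 2) *\<^sub>R pole_diff x"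
  by (auto simp: vec_eq_iff pair_proj_mult_nth odd_proj_mult inner_pole_diff pole_diff_nth)

lemma adjacency_even:
  assumes "antipodal *v w = w"
  shows "adjacency *v w = (inner 1 w / 2) *\<^sub>R 1 - w"
proof -
  have "2 *\<^sub>R (adjacency *v w) = inner 1 w *\<^sub>R 1 - 2 *\<^sub>R w"
    using adjacency_add_antipodal[of w] assms by (simp add: scaleR_2)
  then show ?thesis by (simp add: vec_eq_iff field_simps)
qed

lemma adjacency_square_odd:
  assumes "antipodal *v v = - v"
  shows "adjacency *v (adjacency *v v)
    = real k *\<^sub>R v + (real k - 1 - 2 * real b) *\<^sub>R (adjacency *v v)"
proof -
  have "inner 1 v = - inner 1 v"
    using inner_antipodal[of 1 v] assms by (simp add: antipodal_ones)
  then have "inner 1 v = 0" by simp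
  then have "adjacency *v (adjacency *v v)
      = real k *\<^sub>R v + (real k - 1 - real b) *\<^sub>R (adjacency *v v) + real b *\<^sub>R (- (adjacency *v v))"
    using adjacency_square[of v] assms by simp
  then show ?thesis by (simp add: vec_eq_iff algebra_simps)
qed


definition theta :: real where
  "theta = (real k - 1 - 2 * real b + sqrt ((real k - 1 - 2 * real b)\<^sup>2 + 4 * real k)) / 2"

definition theta' :: real where
  "theta' = (real k - 1 - 2 * real b - sqrt ((real k - 1 - 2 * real b)\<^sup>2 + 4 * real k)) / 2"

lemma theta_add: "theta + theta' = real k - 1 - 2 * real b"
  by (simp add: theta_def theta'_def field_simps)

lemma theta_mult: "theta * theta' = - real k"
proof -
  define a where "a = real k - 1 - 2 * real b"
  define r where "r = sqrt (a\<^sup>2 + 4 * real k)"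
  have "r\<^sup>2 = a\<^sup>2 + 4 * real k" unfolding r_def by simp
  moreover have "theta * theta' = (a\<^sup>2 - r\<^sup>2) / 4"
    unfolding theta_def theta'_def a_def[symmetric] r_def[symmetric]
    by (simp add: power2_eq_square field_simps)
  ultimately show ?thesis by simp
qed

lemma theta_neq: "theta \<noteq> theta'"
proof -
  have "0 < (real k - 1 - 2 * real b)\<^sup>2 + 4 * real k" using b_less by (simp add: add_nonneg_pos)
  then show ?thesis by (simp add: theta_def theta'_def)
qed

definition swap_axis :: "'a \<Rightarrow> 'a \<Rightarrow> real \<Rightarrow> real \<Rightarrow> real^'a" where
  "swap_axis x y t t' = eigen_component adjacency (pole_diff x - pole_diff y) t t'"

definition swap :: "'a \<Rightarrow> 'a \<Rightarrow> real^'a^'a" where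
  "swap x y = householder (swap_axis x y theta theta') ** householder (swap_axis x y theta' theta)"

lemma antipodal_pole_diffs:
  "antipodal *v (pole_diff x - pole_diff y) = - (pole_diff x - pole_diff y)"
  by (simp add: matrix_vector_mult_diff_distrib antipodal_pole_diff)

lemma adjacency_swap_axis:
  "adjacency *v swap_axis x y theta theta' = theta *\<^sub>R swap_axis x y theta theta'"
  "adjacency *v swap_axis x y theta' theta = theta' *\<^sub>R swap_axis x y theta' theta"
  using adjacency_square_odd[OF antipodal_pole_diffs[of x y]]
  by (simp_all add: swap_axis_def eigen_component_eigenvector theta_add theta_mult
      add.commute[of theta'] mult.commute[of theta'])

lemma antipodal_swap_axis: "antipodal *v swap_axis x y t t' = - swap_axis x y t t'"
  using eigen_component_commute[OF _ adjacency_antipodal_commute[symmetric], of _ "- 1"]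
  by (simp add: swap_axis_def antipodal_pole_diffs)

lemma inner_swap_axes: "inner (swap_axis x y theta theta') (swap_axis x y theta' theta) = 0"
  using transpose_adjacency adjacency_swap_axis theta_neq by (rule eigenvectors_orthogonal)

lemma swap_axes_add:
  "swap_axis x y theta theta' + swap_axis x y theta' theta = pole_diff x - pole_diff y"
  unfolding swap_axis_def using theta_neq by (rule eigen_component_sum)

lemma inner_swap_axis_pole_diffs: "inner (swap_axis x y t t') (pole_diff x + pole_diff y) = 0"
proof (unfold swap_axis_def, rule inner_eigen_component)
  show "inner (pole_diff x - pole_diff y) (pole_diff x + pole_diff y) = 0"
    by (simp add: inner_diff_left inner_diff_right inner_add_left inner_add_right
        inner_pole_diff_self inner_commute)
  have self: "inner (adjacency *v pole_diff z) (pole_diff z) = 0" for z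
    using inner_pole_diff_adjacency[of z] by (simp add: inner_commute)
  have cross: "inner (adjacency *v pole_diff x) (pole_diff y)
      = inner (adjacency *v pole_diff y) (pole_diff x)"
    by (metis inner_adjacency inner_commute)
  show "inner (adjacency *v (pole_diff x - pole_diff y)) (pole_diff x + pole_diff y) = 0"
    by (simp add: matrix_vector_mult_diff_distrib inner_diff_left inner_add_right self cross)
qed

lemma swap_mult: "swap x y *v u
    = householder (swap_axis x y theta theta') *v (householder (swap_axis x y theta' theta) *v u)"
  by (simp add: swap_def matrix_vector_mul_assoc)

lemma swap_adjacency: "swap x y *v (adjacency *v u) = adjacency *v (swap x y *v u)"
  by (simp add: swap_mult householder_commute[OF transpose_adjacency adjacency_swap_axis(1)]
      householder_commute[OF transpose_adjacency adjacency_swap_axis(2)])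

lemma swap_antipodal: "swap x y *v (antipodal *v u) = antipodal *v (swap x y *v u)"
proof -
  have odd: "antipodal *v swap_axis x y t t' = (- 1) *\<^sub>R swap_axis x y t t'" for t t'
    by (simp add: antipodal_swap_axis)
  show ?thesis by (simp add: swap_mult householder_commute[OF transpose_antipodal odd])
qed

lemma swap_involution: "swap x y *v (swap x y *v u) = u"
proof -
  let ?H = "householder (swap_axis x y theta theta')"
    and ?H' = "householder (swap_axis x y theta' theta)"
  have "?H' *v (?H *v (?H' *v u)) = ?H *v (?H' *v (?H' *v u))"
    by (rule householders_commute[OF inner_swap_axes, symmetric])
  then show ?thesis by (simp add: swap_mult householder_involution)
qed

lemma inner_swap: "inner u (swap x y *v v) = inner (swap x y *v u) v"
proof -
  let ?H = "householder (swap_axis x y theta theta')"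
    and ?H' = "householder (swap_axis x y theta' theta)"
  have "inner u (swap x y *v v) = inner (?H' *v (?H *v u)) v"
    by (simp add: swap_mult inner_householder_symmetric)
  also have "?H' *v (?H *v u) = swap x y *v u"
    by (simp add: swap_mult householders_commute[OF inner_swap_axes])
  finally show ?thesis .
qed

lemma swap_pole_diff: "swap x y *v pole_diff x = pole_diff y"
  using inner_swap_axes swap_axes_add inner_swap_axis_pole_diffs inner_swap_axis_pole_diffs
  unfolding swap_mult by (rule householder_pair_swap)

lemma swap_pole_diff': "swap x y *v pole_diff y = pole_diff x"
  using swap_involution[of x y "pole_diff x"] by (simp add: swap_pole_diff)

lemma swap_commute: "swap y x = swap x y"
proof -
  have "swap_axis y x t t' = - swap_axis x y t t'" for t t'
    by (simp add: swap_axis_def eigen_component_uminus[symmetric])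
  then show ?thesis by (simp add: swap_def)
qed

lemma swap_odd_proj: "swap x y *v (odd_proj *v u) = odd_proj *v (swap x y *v u)"
  by (simp add: odd_proj_mult swap_antipodal matrix_vector_mult_diff_distrib
      matrix_vector_mult_scaleR)


lemma antipodal_sign_diag: "antipodal *v (sign_diag x *v v) = - (sign_diag x *v (antipodal *v v))"
  using sign_diag_antipodal[of x "antipodal *v v"]
  by (simp add: antipodal_involution matrix_vector_mult_uminus)

lemma odd_proj_sign_diag_odd: "antipodal *v w = - w \<Longrightarrow> odd_proj *v (sign_diag x *v w) = 0"
  by (simp add: odd_proj_even antipodal_sign_diag matrix_vector_mult_uminus)

lemma sign_diag_ones_odd: "antipodal *v (sign_diag x *v 1) = - (sign_diag x *v 1)"
  by (simp add: antipodal_sign_diag antipodal_ones)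

lemma swap_sign_diag_ones: "swap x y *v (sign_diag x *v 1) = sign_diag y *v 1"
  and swap_sign_diag_ones': "swap x y *v (sign_diag y *v 1) = sign_diag x *v 1"
  by (simp_all add: sign_diag_ones matrix_vector_right_distrib swap_adjacency swap_pole_diff
      swap_pole_diff')

definition twisted_swap :: "'a \<Rightarrow> 'a \<Rightarrow> real^'a^'a" where
  "twisted_swap x y = sign_diag y ** swap x y ** odd_proj ** sign_diag x"

lemma twisted_swap_mult:
  "twisted_swap x y *v u = sign_diag y *v (swap x y *v (odd_proj *v (sign_diag x *v u)))"
  by (simp add: twisted_swap_def matrix_vector_mul_assoc matrix_mul_assoc)

lemma antipodal_twisted_swap: "antipodal *v (twisted_swap x y *v u) = twisted_swap x y *v u"
  by (simp add: twisted_swap_mult antipodal_sign_diag swap_antipodal[symmetric] antipodal_odd_proj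
      matrix_vector_mult_uminus)

lemma twisted_swap_antipodal: "twisted_swap x y *v (antipodal *v u) = twisted_swap x y *v u"
  by (simp add: twisted_swap_mult sign_diag_antipodal matrix_vector_mult_uminus odd_proj_antipodal)

lemma twisted_swap_ones: "twisted_swap x y *v 1 = 1"
  by (simp add: twisted_swap_mult odd_proj_odd[OF sign_diag_ones_odd] swap_sign_diag_ones
      sign_diag_involution)

lemma inner_ones_twisted_swap: "inner 1 (twisted_swap x y *v u) = inner 1 u"
proof -
  have "inner 1 (twisted_swap x y *v u)
      = inner (swap x y *v (sign_diag y *v 1)) (odd_proj *v (sign_diag x *v u))"
    by (simp add: twisted_swap_mult inner_sign_diag inner_swap)
  also have "\<dots> = inner (odd_proj *v (sign_diag x *v 1)) (sign_diag x *v u)"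
    by (simp add: swap_sign_diag_ones' inner_odd_proj)
  also have "\<dots> = inner 1 u"
    by (simp add: odd_proj_odd[OF sign_diag_ones_odd] inner_sign_diag sign_diag_involution)
  finally show ?thesis .
qed

text \<open>The twisted swap maps into the even vectors and preserves the all-ones functional,
  which alone determines the adjacency matrix there.\<close>

lemma twisted_swap_adjacency:
  "twisted_swap x y *v (adjacency *v u) = adjacency *v (twisted_swap x y *v u)"
proof -
  have "2 *\<^sub>R (twisted_swap x y *v (adjacency *v u))
      = twisted_swap x y *v (adjacency *v u + adjacency *v (antipodal *v u))"
    by (simp add: scaleR_2 matrix_vector_right_distrib adjacency_antipodal_commute
        twisted_swap_antipodal)
  also have "\<dots> = inner 1 u *\<^sub>R 1 - 2 *\<^sub>R (twisted_swap x y *v u)"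
    by (simp add: adjacency_add_antipodal matrix_vector_mult_diff_distrib matrix_vector_mult_scaleR
        twisted_swap_ones twisted_swap_antipodal scaleR_2)
  also have "\<dots> = 2 *\<^sub>R (adjacency *v (twisted_swap x y *v u))"
    by (simp add: adjacency_even[OF antipodal_twisted_swap] inner_ones_twisted_swap algebra_simps)
  finally show ?thesis by simp
qed

lemma swap_odd_pair_proj:
  "swap x y *v (odd_proj *v (pair_proj x *v u)) = pair_proj y *v (swap x y *v (odd_proj *v u))"
proof -
  have "swap x y *v (odd_proj *v (pair_proj x *v u))
      = swap x y *v (pair_proj x *v (odd_proj *v (odd_proj *v u)))"
    by (simp add: odd_proj_pair_proj odd_proj_idem)
  also have "\<dots> = (inner (pole_diff x) (odd_proj *v u) / 2) *\<^sub>R pole_diff y"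
    by (simp add: pair_proj_odd_proj matrix_vector_mult_scaleR swap_pole_diff)
  also have "\<dots> = pair_proj y *v (odd_proj *v (swap x y *v (odd_proj *v u)))"
    by (simp add: pair_proj_odd_proj inner_swap swap_pole_diff')
  also have "\<dots> = pair_proj y *v (swap x y *v (odd_proj *v u))"
    by (simp add: swap_odd_proj odd_proj_idem)
  finally show ?thesis .
qed

definition intertwiner :: "'a \<Rightarrow> 'a \<Rightarrow> real^'a^'a" where
  "intertwiner x y = swap x y ** odd_proj + twisted_swap x y"

lemma intertwiner_mult: "intertwiner x y *v u = swap x y *v (odd_proj *v u) + twisted_swap x y *v u"
  by (simp add: intertwiner_def matrix_vector_mult_add_rdistrib matrix_vector_mul_assoc[symmetric])

lemma intertwiner_adjacency:
  "intertwiner x y *v (adjacency *v u) = adjacency *v (intertwiner x y *v u)"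
  by (simp add: intertwiner_mult odd_proj_adjacency swap_adjacency twisted_swap_adjacency
      matrix_vector_right_distrib)

lemma intertwiner_sign_diag:
  "intertwiner x y *v (sign_diag x *v u) = sign_diag y *v (intertwiner x y *v u)"
  by (simp add: intertwiner_mult twisted_swap_mult sign_diag_involution matrix_vector_right_distrib)

lemma intertwiner_pair_proj:
  "intertwiner x y *v (pair_proj x *v u) = pair_proj y *v (intertwiner x y *v u)"
  by (simp add: intertwiner_mult twisted_swap_mult swap_odd_pair_proj sign_diag_pair_proj
      matrix_vector_right_distrib)

lemma intertwiner_sphere_proj:
  assumes "i \<le> 3"
  shows "intertwiner x y *v (sphere_proj x i *v u) = sphere_proj y i *v (intertwiner x y *v u)"
proof -
  consider "i = 0" | "i = 1" | "i = 2" | "i = 3" using assms by linarith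
  then show ?thesis
    by cases (simp_all only: sphere_proj_0 sphere_proj_1 sphere_proj_2 sphere_proj_3
        matrix_vector_mult_scaleR matrix_vector_right_distrib matrix_vector_mult_diff_distrib
        intertwiner_pair_proj intertwiner_sign_diag)
qed

lemma intertwiner_inverse: "intertwiner y x *v (intertwiner x y *v u) = u"
proof -
  have odd_part: "odd_proj *v (intertwiner x y *v u) = swap x y *v (odd_proj *v u)"
    by (simp add: intertwiner_mult matrix_vector_right_distrib odd_proj_idem
        swap_odd_proj[symmetric] odd_proj_even[OF antipodal_twisted_swap])
  have "antipodal *v (swap x y *v (odd_proj *v u)) = - (swap x y *v (odd_proj *v u))"
    by (simp add: swap_antipodal[symmetric] antipodal_odd_proj matrix_vector_mult_uminus)
  then have even_part: "odd_proj *v (sign_diag y *v (intertwiner x y *v u))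
      = swap x y *v (odd_proj *v (sign_diag x *v u))"
    by (simp add: intertwiner_mult twisted_swap_mult matrix_vector_right_distrib
        sign_diag_involution odd_proj_sign_diag_odd swap_odd_proj[symmetric] odd_proj_idem)
  have "intertwiner y x *v (intertwiner x y *v u)
      = odd_proj *v u + sign_diag x *v (odd_proj *v (sign_diag x *v u))"
    unfolding intertwiner_mult[of y x] twisted_swap_mult[of y x] swap_commute[of y x]
      odd_part even_part
    by (simp add: swap_involution)
  also have "sign_diag x *v (odd_proj *v (sign_diag x *v u)) = (1/2) *\<^sub>R (u + antipodal *v u)"
    by (simp add: odd_proj_mult matrix_vector_mult_diff_distrib matrix_vector_mult_scaleR
        sign_diag_involution sign_diag_antipodal matrix_vector_mult_uminus)
  also have "odd_proj *v u + (1/2) *\<^sub>R (u + antipodal *v u) = u"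
    by (simp add: odd_proj_mult vec_eq_iff field_simps)
  finally show ?thesis .
qed

lemma intertwiner_inverse_matrix: "intertwiner y x ** intertwiner x y = mat 1"
  by (simp add: matrix_eq matrix_vector_mul_assoc[symmetric] intertwiner_inverse)

lemma intertwiner_adjacency_matrix: "intertwiner x y ** adjacency = adjacency ** intertwiner x y"
  by (simp add: matrix_eq matrix_vector_mul_assoc[symmetric] intertwiner_adjacency)

lemma intertwiner_sphere_proj_matrix:
  "i \<le> 3 \<Longrightarrow> intertwiner x y ** sphere_proj x i = sphere_proj y i ** intertwiner x y"
  by (simp add: matrix_eq matrix_vector_mul_assoc[symmetric] intertwiner_sphere_proj)

lemma adj_matrix_eq: "adj_matrix E = map_matrix of_real adjacency"
  by (simp add: vec_eq_iff adj_matrix_def adjacency_def)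

lemma dual_idem_eq: "dual_idem E x i = map_matrix of_real (sphere_proj x i)"
  by (simp add: vec_eq_iff dual_idem_def sphere_proj_def diag_mat_def)

end

theorem theorem7p6:
  fixes E :: "'a::finite \<Rightarrow> 'a \<Rightarrow> bool"
  assumes "taylor_graph E"
  shows "pseudo_vertex_transitive E 3"
proof -
  obtain k b where "taylor E k b"
    using assms unfolding taylor_graph_def taylor_def by blast
  then interpret taylor E k b .
  show ?thesis
  proof (rule pseudo_vertex_transitiveI)
    fix x y
    let ?C = "map_matrix of_real (intertwiner x y) :: complex^'a^'a"
    let ?C' = "map_matrix of_real (intertwiner y x) :: complex^'a^'a"
    have "?C ** ?C' = mat 1" "?C' ** ?C = mat 1"
      by (simp_all add: map_matrix_of_real_mult[symmetric] intertwiner_inverse_matrix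
          map_matrix_of_real_mat_1)
    moreover have "?C ** adj_matrix E = adj_matrix E ** ?C"
      by (simp add: adj_matrix_eq map_matrix_of_real_mult[symmetric] intertwiner_adjacency_matrix)
    moreover have "\<forall>i\<le>3. ?C ** dual_idem E x i = dual_idem E y i ** ?C"
      by (simp add: dual_idem_eq map_matrix_of_real_mult[symmetric] intertwiner_sphere_proj_matrix)
    ultimately show "\<exists>C C'. C ** C' = mat 1 \<and> C' ** C = mat 1
        \<and> C ** adj_matrix E = adj_matrix E ** C
        \<and> (\<forall>i\<le>3. C ** dual_idem E x i = dual_idem E y i ** C)"
      by blast
  qed
qed

end
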